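(* Let $V,W$ be complex vector spaces, let $M=(M_1,\dots,M_s)\in\mathrm{Hom}(V,W)^s$, and suppose $\mathrm{rk}(M)\geq r$ for some $r\in\mathbb{Z}_{\geq 0}$. Then there is a finite-dimensional subspace $U\subseteq V$ such that the restricted tuple $(M_1|_U,\dots,M_s|_U)\in\mathrm{Hom}(U,W)^s$ has rank at least $r$.
   Context: Rank of a tuple: for vector spaces $V,W$ and $M=(M_1,\dots,M_s)\in\mathrm{Hom}(V,W)^s$, $\mathrm{rk}(M)$ is the infimum of $\mathrm{rk}(\sum_i\lambda_iM_i)\in\mathbb{Z}_{\ge0}\cup\{\infty\}$ over all nonzero $(\lambda_1,\dots,\lambda_s)\in\mathbb{C}^s$ (so $\mathrm{rk}(M)=\infty$ if $s=0$). *)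

theory Defs
  imports Complex_Main "HOL-Library.Extended_Nat"
begin

text \<open>Complex vector spaces are modelled by the locale vector_space of HOL
  with a scalar multiplication of type complex => 'v => 'v.\<close>

text \<open>Dimension (in N \<union> {\<infinity>}) of the span of a set X of vectors:
  the supremum of the sizes of finite linearly independent subsets of X.\<close>
definition vs_dim :: "(complex \<Rightarrow> 'w::ab_group_add \<Rightarrow> 'w) \<Rightarrow> 'w set \<Rightarrow> enat" where
  "vs_dim scaleW X =
     Sup {enat (card B) | B. finite B \<and> B \<subseteq> X \<and> \<not> module.dependent scaleW B}"

definition map_rank :: "(complex \<Rightarrow> 'w::ab_group_add \<Rightarrow> 'w) \<Rightarrow> ('v \<Rightarrow> 'w) \<Rightarrow> 'v set \<Rightarrow> enat" where
  "map_rank scaleW f S = vs_dim scaleW (f ` S)"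

text \<open>Rank of the tuple (M 0, ..., M (s-1)) restricted to S: infimum of the ranks
  of all nontrivial linear combinations; equals \<infinity> when s = 0.\<close>
definition tuple_rank ::
  "(complex \<Rightarrow> 'w::ab_group_add \<Rightarrow> 'w) \<Rightarrow> nat \<Rightarrow> (nat \<Rightarrow> 'v \<Rightarrow> 'w) \<Rightarrow> 'v set \<Rightarrow> enat"
  where
  "tuple_rank scaleW s M S =
     (INF c \<in> {c :: nat \<Rightarrow> complex. \<exists>i<s. c i \<noteq> 0}.
        map_rank scaleW (\<lambda>x. \<Sum>i<s. scaleW (c i) (M i x)) S)"

end

theory Submission
  imports Defs "HOL-Analysis.Analysis"
begin

text \<open>
  If \<open>\<Sum>i c\<^sub>i M\<^sub>i\<close> has rank at least r, this is witnessed by r vectors whose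
  images are linearly independent. Independence of finitely many images is an open condition
  in c: applying coordinate functionals turns a linear relation among the perturbed images
  into a small perturbation of the identity system, which has only the trivial solution.
  Ranks do not change when c is scaled, so only c on the compact unit sphere of the
  \<open>\<ell>\<^sup>1\<close>-norm matter; finitely many witness sets suffice to cover it, and U is the
  span of their union.
\<close>

definition indep_family ::
  "(complex \<Rightarrow> 'w::ab_group_add \<Rightarrow> 'w) \<Rightarrow> nat \<Rightarrow> (nat \<Rightarrow> 'w) \<Rightarrow> bool"
  where "indep_family sc r v \<longleftrightarrow> (\<forall>x. (\<Sum>j<r. sc (x j) (v j)) = 0 \<longrightarrow> (\<forall>j<r. x j = 0))"

definition lincomb ::
  "(complex \<Rightarrow> 'w::ab_group_add \<Rightarrow> 'w) \<Rightarrow> nat \<Rightarrow> (nat \<Rightarrow> 'v \<Rightarrow> 'w) \<Rightarrow>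
    (nat \<Rightarrow> complex) \<Rightarrow> 'v \<Rightarrow> 'w"
  where "lincomb sc s M c x = (\<Sum>i<s. sc (c i) (M i x))"

lemma tuple_rank_ge_iff:
  "enat r \<le> tuple_rank sc s M S \<longleftrightarrow>
     (\<forall>c. (\<exists>i<s. c i \<noteq> 0) \<longrightarrow> enat r \<le> vs_dim sc (lincomb sc s M c ` S))"
  by (simp add: tuple_rank_def le_INF_iff map_rank_def lincomb_def[abs_def])

lemma vs_dim_mono: "X \<subseteq> Y \<Longrightarrow> vs_dim sc X \<le> vs_dim sc Y"
  unfolding vs_dim_def by (rule Sup_subset_mono) blast

lemma near_identity_system_trivial:
  fixes x :: "nat \<Rightarrow> 'a::real_normed_div_algebra"
  assumes eq: "\<And>k. k < r \<Longrightarrow> x k + (\<Sum>j<r. a k j * x j) = 0"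
    and small: "(\<Sum>k<r. \<Sum>j<r. norm (a k j)) < 1"
  shows "\<forall>k<r. x k = 0"
proof -
  define S where "S = (\<Sum>k<r. norm (x k))"
  have xS: "norm (x j) \<le> S" if "j < r" for j
    unfolding S_def by (rule member_le_sum) (use that in auto)
  have bound: "norm (x k) \<le> S * (\<Sum>j<r. norm (a k j))" if k: "k < r" for k
  proof -
    have "norm (x k) = norm (\<Sum>j<r. a k j * x j)"
      using eq[OF k] by (metis add_eq_0_iff2 norm_minus_cancel)
    also have "\<dots> \<le> (\<Sum>j<r. norm (a k j) * norm (x j))"
      by (rule order_trans[OF norm_sum]) (simp add: norm_mult)
    also have "\<dots> \<le> (\<Sum>j<r. norm (a k j) * S)"
      by (rule sum_mono) (simp add: mult_left_mono xS)
    finally show ?thesis by (simp add: sum_distrib_left mult.commute)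
  qed
  have "S \<le> (\<Sum>k<r. S * (\<Sum>j<r. norm (a k j)))"
    by (subst (1) S_def) (rule sum_mono, simp add: bound)
  also have "\<dots> = S * (\<Sum>k<r. \<Sum>j<r. norm (a k j))"
    by (simp add: sum_distrib_left)
  finally have "S \<le> S * (\<Sum>k<r. \<Sum>j<r. norm (a k j))" .
  moreover have "S \<ge> 0"
    by (simp add: S_def sum_nonneg)
  ultimately have "S = 0"
    using small mult_strict_left_mono[OF small, of S] by fastforce
  then show ?thesis
    by (simp add: S_def sum_nonneg_eq_0_iff)
qed

locale complex_vector_space = vector_space scale for scale :: "complex \<Rightarrow> 'v::ab_group_add \<Rightarrow> 'v"
begin

lemma indep_family_inj_on:
  assumes "indep_family scale r v"
  shows "inj_on v {..<r}"
proof (rule inj_onI, rule ccontr)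
  fix a b assume ab: "a \<in> {..<r}" "b \<in> {..<r}" "v a = v b" "a \<noteq> b"
  define x where "x = (\<lambda>j. if j = a then 1 else if j = b then -1 else (0::complex))"
  have "(\<Sum>j<r. scale (x j) (v j)) = (\<Sum>j\<in>{a,b}. scale (x j) (v j))"
    by (rule sum.mono_neutral_right) (use ab in \<open>auto simp: x_def\<close>)
  also have "\<dots> = 0" using ab by (simp add: x_def scale_minus_left)
  finally have "x a = 0" using assms ab unfolding indep_family_def by blast
  then show False by (simp add: x_def)
qed

lemma indep_family_independent:
  assumes "indep_family scale r v"
  shows "independent (v ` {..<r})"
proof
  assume "dependent (v ` {..<r})"
  then obtain u where u: "\<exists>b\<in>v ` {..<r}. u b \<noteq> 0" "(\<Sum>b\<in>v ` {..<r}. scale (u b) b) = 0"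
    by (auto simp: dependent_finite)
  then have "(\<Sum>j<r. scale (u (v j)) (v j)) = 0"
    by (simp add: sum.reindex[OF indep_family_inj_on[OF assms]])
  then have "\<forall>j<r. u (v j) = 0"
    using assms[unfolded indep_family_def, THEN spec, of "\<lambda>j. u (v j)"] by simp
  with u(1) show False by auto
qed

lemma independent_enumeration_indep_family:
  assumes "finite B" "independent B" "card B = r"
  obtains v where "v ` {..<r} = B" "indep_family scale r v"
proof -
  obtain v where "bij_betw v {..<r} B"
    using ex_bij_betw_nat_finite[OF assms(1)] assms(3) by (auto simp: lessThan_atLeast0)
  then have inj: "inj_on v {..<r}" and im: "v ` {..<r} = B"
    by (auto simp: bij_betw_def)
  have "indep_family scale r v"
    unfolding indep_family_def
  proof (intro allI impI)
    fix x j assume x: "(\<Sum>j<r. scale (x j) (v j)) = 0" and j: "j < r"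
    define y where "y b = x (the_inv_into {..<r} v b)" for b
    have "(\<Sum>b\<in>B. scale (y b) b) = (\<Sum>j<r. scale (y (v j)) (v j))"
      unfolding im[symmetric] by (rule sum.reindex[OF inj, unfolded comp_def])
    also have "\<dots> = (\<Sum>j<r. scale (x j) (v j))"
      by (rule sum.cong) (auto simp: y_def the_inv_into_f_f[OF inj])
    finally have "\<forall>b\<in>B. y b = 0" using x assms by (auto simp: dependent_finite)
    then show "x j = 0" using im j by (auto simp: y_def the_inv_into_f_f[OF inj])
  qed
  with im show thesis by (rule that)
qed

lemma vs_dim_ge_iff_indep_family:
  "enat r \<le> vs_dim scale X \<longleftrightarrow> (\<exists>v. (\<forall>j<r. v j \<in> X) \<and> indep_family scale r v)"
proof
  assume r: "enat r \<le> vs_dim scale X"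
  obtain B where B: "finite B" "B \<subseteq> X" "independent B" "r \<le> card B"
  proof (cases r)
    case 0 then show thesis using independent_empty by (intro that[of "{}"]) auto
  next
    case (Suc r')
    then have "enat r' < vs_dim scale X" using r by (simp add: Suc_ile_eq)
    then show thesis
      unfolding vs_dim_def less_Sup_iff using Suc by (auto intro: that)
  qed
  then obtain B' where B': "B' \<subseteq> B" "card B' = r"
    by (meson obtain_subset_with_card_n)
  then have "finite B'" "independent B'"
    using B by (auto intro: finite_subset dest: independent_mono)
  then obtain v where "v ` {..<r} = B'" "indep_family scale r v"
    by (rule independent_enumeration_indep_family[OF _ _ B'(2)])
  then show "\<exists>v. (\<forall>j<r. v j \<in> X) \<and> indep_family scale r v"
    using B'(1) B(2) by blast
next
  assume "\<exists>v. (\<forall>j<r. v j \<in> X) \<and> indep_family scale r v"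
  then obtain v where v: "\<forall>j<r. v j \<in> X" "indep_family scale r v" by blast
  have "card (v ` {..<r}) = r"
    by (simp add: card_image indep_family_inj_on[OF v(2)])
  moreover have "v ` {..<r} \<subseteq> X" using v(1) by auto
  ultimately have "enat r \<in> {enat (card B) | B. finite B \<and> B \<subseteq> X \<and> independent B}"
    using indep_family_independent[OF v(2)]
    by (metis (mono_tags, lifting) finite_imageI finite_lessThan mem_Collect_eq)
  then show "enat r \<le> vs_dim scale X"
    unfolding vs_dim_def by (rule Sup_upper)
qed

lemma vs_dim_image_ge_iff_indep_family:
  "enat r \<le> vs_dim scale (g ` S) \<longleftrightarrow>
    (\<exists>u. (\<forall>j<r. u j \<in> S) \<and> indep_family scale r (\<lambda>j. g (u j)))"
proof
  assume "enat r \<le> vs_dim scale (g ` S)"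
  then obtain v where v: "\<forall>j<r. v j \<in> g ` S" "indep_family scale r v"
    by (auto simp: vs_dim_ge_iff_indep_family)
  define u where "u j = inv_into S g (v j)" for j
  have "\<forall>j<r. u j \<in> S" using v(1) by (simp add: u_def inv_into_into)
  moreover have "indep_family scale r (\<lambda>j. g (u j))"
    using v unfolding indep_family_def u_def by (simp add: f_inv_into_f)
  ultimately show "\<exists>u. (\<forall>j<r. u j \<in> S) \<and> indep_family scale r (\<lambda>j. g (u j))" by blast
next
  assume "\<exists>u. (\<forall>j<r. u j \<in> S) \<and> indep_family scale r (\<lambda>j. g (u j))"
  then obtain u where "\<forall>j<r. u j \<in> S" "indep_family scale r (\<lambda>j. g (u j))" by blast
  then show "enat r \<le> vs_dim scale (g ` S)"
    unfolding vs_dim_ge_iff_indep_family by (intro exI[of _ "\<lambda>j. g (u j)"]) auto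
qed

lemma indep_family_scale:
  assumes "indep_family scale r v" "a \<noteq> 0"
  shows "indep_family scale r (\<lambda>j. scale a (v j))"
  unfolding indep_family_def
proof (intro allI impI)
  fix x j assume "(\<Sum>j<r. scale (x j) (scale a (v j))) = 0" "j < r"
  then have "x j * a = 0"
    using assms(1)[unfolded indep_family_def, THEN spec, of "\<lambda>j. x j * a"] by simp
  then show "x j = 0" using assms(2) by simp
qed

lemma indep_family_coordinate_functionals:
  assumes "indep_family scale r v"
  obtains \<phi> where "\<And>k. Vector_Spaces.linear scale (*) (\<phi> k)"
    "\<And>j k. j < r \<Longrightarrow> k < r \<Longrightarrow> \<phi> k (v j) = (if j = k then 1 else 0)"
proof -
  interpret P: vector_space_pair scale "(*) :: complex \<Rightarrow> complex \<Rightarrow> complex"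
    by (intro vector_space_pair.intro vector_space_axioms vector_space_over_itself.vector_space_axioms)
  define \<phi> where "\<phi> k = P.construct (v ` {..<r}) (\<lambda>y. if y = v k then 1 else 0)" for k
  have "\<phi> k (v j) = (if j = k then 1 else 0)" if "j < r" "k < r" for j k
  proof -
    have "\<phi> k (v j) = (if v j = v k then 1 else 0)"
      unfolding \<phi>_def
      by (rule P.construct_basis) (use indep_family_independent[OF assms] that in auto)
    then show ?thesis
      using inj_onD[OF indep_family_inj_on[OF assms]] that by auto
  qed
  moreover have "Vector_Spaces.linear scale (*) (\<phi> k)" for k
    unfolding \<phi>_def by (rule P.linear_construct) (use indep_family_independent[OF assms] in simp)
  ultimately show thesis using that by blast
qed

lemma coordinate_functional_relation:
  fixes r :: nat
  assumes "Vector_Spaces.linear scale (*) \<phi>"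
    and "\<And>j. j < r \<Longrightarrow> \<phi> (v j) = (if j = k then 1 else 0)" "k < r"
    and "(\<Sum>j<r. scale (x j) (v j + (\<Sum>i<s. scale (d i) (w i j)))) = 0"
  shows "x k + (\<Sum>j<r. (\<Sum>i<s. d i * \<phi> (w i j)) * x j) = 0"
proof -
  interpret L: Vector_Spaces.linear scale "(*)" \<phi> by fact
  have "0 = \<phi> (\<Sum>j<r. scale (x j) (v j + (\<Sum>i<s. scale (d i) (w i j))))"
    using assms(4) by simp
  also have "\<dots> = (\<Sum>j<r. x j * \<phi> (v j)) + (\<Sum>j<r. (\<Sum>i<s. d i * \<phi> (w i j)) * x j)"
    by (simp add: L.sum L.scale L.add distrib_left sum.distrib sum_distrib_left
        sum_distrib_right mult_ac)
  also have "(\<Sum>j<r. x j * \<phi> (v j)) = (\<Sum>j<r. if j = k then x j else 0)"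
    by (rule sum.cong) (simp_all add: assms(2))
  also have "\<dots> = x k"
    using assms(3) by simp
  finally show ?thesis by simp
qed

lemma indep_family_perturb:
  assumes "indep_family scale r v"
  obtains \<delta> where "\<delta> > 0"
    "\<And>d. \<forall>i<s. cmod (d i) < \<delta> \<Longrightarrow>
      indep_family scale r (\<lambda>j. v j + (\<Sum>i<s. scale (d i) (w i j)))"
proof -
  obtain \<phi> where lin: "\<And>k. Vector_Spaces.linear scale (*) (\<phi> k)"
    and \<phi>v: "\<And>j k. j < r \<Longrightarrow> k < r \<Longrightarrow> \<phi> k (v j) = (if j = k then 1 else 0)"
    using indep_family_coordinate_functionals[OF assms] by blast
  define T where "T = (\<Sum>k<r. \<Sum>j<r. \<Sum>i<s. cmod (\<phi> k (w i j)))"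
  define \<delta> where "\<delta> = 1 / (T + 1)"
  have "T \<ge> 0" by (simp add: T_def sum_nonneg)
  then have \<delta>: "\<delta> > 0" "\<delta> * T < 1" by (simp_all add: \<delta>_def)
  have "indep_family scale r (\<lambda>j. v j + (\<Sum>i<s. scale (d i) (w i j)))"
    if d: "\<forall>i<s. cmod (d i) < \<delta>" for d
    unfolding indep_family_def
  proof (rule allI, rule impI)
    fix x assume x: "(\<Sum>j<r. scale (x j) (v j + (\<Sum>i<s. scale (d i) (w i j)))) = 0"
    define a where "a k j = (\<Sum>i<s. d i * \<phi> k (w i j))" for k j
    have system: "x k + (\<Sum>j<r. a k j * x j) = 0" if "k < r" for k
      unfolding a_def by (rule coordinate_functional_relation[OF lin _ that x]) (simp add: \<phi>v that)
    have "(\<Sum>k<r. \<Sum>j<r. cmod (a k j)) \<le> (\<Sum>k<r. \<Sum>j<r. \<Sum>i<s. \<delta> * cmod (\<phi> k (w i j)))"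
      unfolding a_def
      by (intro sum_mono order_trans[OF norm_sum])
        (use d in \<open>auto simp: norm_mult less_imp_le intro!: mult_right_mono\<close>)
    then have "(\<Sum>k<r. \<Sum>j<r. cmod (a k j)) < 1"
      using \<delta>(2) by (simp add: T_def sum_distrib_left)
    with system show "\<forall>j<r. x j = 0" by (rule near_identity_system_trivial)
  qed
  with \<delta>(1) show thesis by (rule that)
qed

lemma lincomb_scale_coeffs:
  assumes "\<And>i. i < s \<Longrightarrow> c i = a * c' i"
  shows "lincomb scale s M c x = scale a (lincomb scale s M c' x)"
  using assms by (simp add: lincomb_def scale_sum_right)

lemma indep_lincomb_nhds:
  assumes "indep_family scale r (\<lambda>j. lincomb scale s M c0 (u j))"
  obtains N where "open N" "c0 \<in> N"
    "\<And>c. c \<in> N \<Longrightarrow> indep_family scale r (\<lambda>j. lincomb scale s M c (u j))"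
proof -
  obtain \<delta> where "\<delta> > 0" and perturb: "\<And>d. \<forall>i<s. cmod (d i) < \<delta> \<Longrightarrow>
      indep_family scale r (\<lambda>j. lincomb scale s M c0 (u j) + (\<Sum>i<s. scale (d i) (M i (u j))))"
    using indep_family_perturb[OF assms, where s = s and w = "\<lambda>i j. M i (u j)"] by blast
  define N where "N = {c. \<forall>i\<in>{..<s}. c i \<in> ball (c0 i) \<delta>}"
  have "open N"
    unfolding N_def by (rule product_topology_basis') auto
  moreover have "c0 \<in> N" using \<open>\<delta> > 0\<close> by (simp add: N_def)
  moreover have "indep_family scale r (\<lambda>j. lincomb scale s M c (u j))" if "c \<in> N" for c
  proof -
    have "\<forall>i<s. cmod (c i - c0 i) < \<delta>"
      using that by (auto simp: N_def dist_norm norm_minus_commute)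
    moreover have "lincomb scale s M c0 y + (\<Sum>i<s. scale (c i - c0 i) (M i y))
        = lincomb scale s M c y" for y
      by (simp add: lincomb_def scale_left_diff_distrib sum_subtractf)
    ultimately show ?thesis using perturb[of "\<lambda>i. c i - c0 i"] by simp
  qed
  ultimately show thesis by (rule that)
qed


lemma vs_dim_lincomb_ge_nhds:
  assumes "enat r \<le> vs_dim scale (lincomb scale s M c0 ` UNIV)"
  obtains F N where "finite F" "open N" "c0 \<in> N"
    "\<And>c. c \<in> N \<Longrightarrow> enat r \<le> vs_dim scale (lincomb scale s M c ` F)"
proof -
  obtain u where "indep_family scale r (\<lambda>j. lincomb scale s M c0 (u j))"
    using assms unfolding vs_dim_image_ge_iff_indep_family by blast
  then obtain N where "open N" "c0 \<in> N"
    "\<And>c. c \<in> N \<Longrightarrow> indep_family scale r (\<lambda>j. lincomb scale s M c (u j))"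
    by (rule indep_lincomb_nhds) blast
  then show thesis
    by (intro that[of "u ` {..<r}" N]) (auto simp: vs_dim_image_ge_iff_indep_family)
qed

lemma vs_dim_lincomb_scale_coeffs_ge:
  assumes "a \<noteq> 0" "\<And>i. i < s \<Longrightarrow> c i = a * c' i"
    and "enat r \<le> vs_dim scale (lincomb scale s M c' ` S)"
  shows "enat r \<le> vs_dim scale (lincomb scale s M c ` S)"
proof -
  obtain u where "\<forall>j<r. u j \<in> S" "indep_family scale r (\<lambda>j. lincomb scale s M c' (u j))"
    using assms(3) unfolding vs_dim_image_ge_iff_indep_family by blast
  then show ?thesis
    unfolding vs_dim_image_ge_iff_indep_family
    by (intro exI[of _ u]) (simp add: lincomb_scale_coeffs[OF assms(2)] indep_family_scale assms(1))
qed

end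

lemma compact_finite_witness:
  assumes "compact K"
    and locally: "\<And>c. c \<in> K \<Longrightarrow> \<exists>F N. finite F \<and> open N \<and> c \<in> N \<and> (\<forall>c'\<in>N. P F c')"
    and mono: "\<And>F G c. P F c \<Longrightarrow> F \<subseteq> G \<Longrightarrow> P G c"
  shows "\<exists>F. finite F \<and> (\<forall>c\<in>K. P F c)"
proof -
  obtain FF NN where FN: "\<And>c. c \<in> K \<Longrightarrow>
      finite (FF c) \<and> open (NN c) \<and> c \<in> NN c \<and> (\<forall>c'\<in>NN c. P (FF c) c')"
    using locally by metis
  have "K \<subseteq> (\<Union>c\<in>K. NN c)" using FN by blast
  then obtain C where C: "C \<subseteq> K" "finite C" "K \<subseteq> (\<Union>c\<in>C. NN c)"
    using compactE_image[OF \<open>compact K\<close>, of K NN] FN by blast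
  have "P (\<Union>(FF ` C)) c" if c: "c \<in> K" for c
  proof -
    obtain t where "t \<in> C" "c \<in> NN t" using C(3) c by blast
    then show ?thesis using FN C(1) by (blast intro: mono)
  qed
  moreover have "finite (\<Union>(FF ` C))" using C FN by blast
  ultimately show ?thesis by blast
qed

text \<open>Coordinates from s on are pinned to 0 so that the sphere is compact in the product
  topology of \<open>nat \<Rightarrow> complex\<close>.\<close>

definition coeff_sphere :: "nat \<Rightarrow> (nat \<Rightarrow> complex) set" where
  "coeff_sphere s = {c. (\<forall>i\<ge>s. c i = 0) \<and> (\<Sum>i<s. cmod (c i)) = 1}"

lemma compact_coeff_sphere: "compact (coeff_sphere s)"
proof -
  define Box :: "(nat \<Rightarrow> complex) set"
    where "Box = PiE UNIV (\<lambda>i. if i < s then cball 0 1 else {0})"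
  have "compactin (product_topology (\<lambda>_. euclidean) UNIV) Box"
    unfolding Box_def by (subst compactin_PiE) auto
  then have "compact Box" by (simp add: euclidean_product_topology)
  moreover have "closed {c::nat \<Rightarrow> complex. (\<Sum>i<s. cmod (c i)) = 1}"
    by (intro closed_Collect_eq continuous_intros) simp_all
  moreover have "coeff_sphere s = Box \<inter> {c. (\<Sum>i<s. cmod (c i)) = 1}"
  proof -
    have "c \<in> coeff_sphere s \<longleftrightarrow> c \<in> Box \<and> (\<Sum>i<s. cmod (c i)) = 1" for c
    proof
      assume c: "c \<in> coeff_sphere s"
      have "cmod (c i) \<le> 1" if "i < s" for i
        using member_le_sum[of i "{..<s}" "\<lambda>i. cmod (c i)"] that c by (simp add: coeff_sphere_def)
      with c show "c \<in> Box \<and> (\<Sum>i<s. cmod (c i)) = 1"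
        by (auto simp: coeff_sphere_def Box_def PiE_iff)
    next
      assume c: "c \<in> Box \<and> (\<Sum>i<s. cmod (c i)) = 1"
      then have "c i \<in> (if i < s then cball 0 1 else {0})" for i
        by (simp add: Box_def PiE_iff)
      then have "c i = 0" if "s \<le> i" for i
        using that by (metis not_le singletonD)
      with c show "c \<in> coeff_sphere s"
        by (simp add: coeff_sphere_def)
    qed
    then show ?thesis by blast
  qed
  ultimately show ?thesis by (simp add: compact_Int_closed)
qed

lemma coeff_sphere_nonzero:
  assumes "c \<in> coeff_sphere s"
  shows "\<exists>i<s. c i \<noteq> 0"
proof (rule ccontr)
  assume "\<not> (\<exists>i<s. c i \<noteq> 0)"
  then have "(\<Sum>i<s. cmod (c i)) = 0" by simp
  with assms show False by (simp add: coeff_sphere_def)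
qed

lemma coeff_sphere_normalize:
  assumes "\<exists>i<s. c i \<noteq> 0"
  obtains a c' where "a \<noteq> 0" "c' \<in> coeff_sphere s" "\<And>i. i < s \<Longrightarrow> c i = a * c' i"
proof -
  define n where "n = (\<Sum>i<s. cmod (c i))"
  obtain i0 where "i0 < s" "c i0 \<noteq> 0" using assms by blast
  then have "n > 0"
    unfolding n_def by (intro sum_pos2[of _ i0]) auto
  define c' where "c' i = (if i < s then c i / of_real n else 0)" for i
  have "(\<Sum>i<s. cmod (c' i)) = (\<Sum>i<s. cmod (c i)) / n"
    using \<open>n > 0\<close> by (simp add: c'_def norm_divide sum_divide_distrib)
  then have "c' \<in> coeff_sphere s"
    using \<open>n > 0\<close> by (simp add: coeff_sphere_def c'_def n_def)
  moreover have "c i = of_real n * c' i" if "i < s" for i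
    using \<open>n > 0\<close> that by (simp add: c'_def)
  ultimately show thesis using \<open>n > 0\<close> by (intro that[of "of_real n" c']) auto
qed

theorem lemma3p4:
  fixes scaleV :: "complex \<Rightarrow> 'v::ab_group_add \<Rightarrow> 'v"
    and scaleW :: "complex \<Rightarrow> 'w::ab_group_add \<Rightarrow> 'w"
    and s r :: nat
    and M :: "nat \<Rightarrow> 'v \<Rightarrow> 'w"
  assumes "vector_space scaleV"
    and "vector_space scaleW"
    and "\<forall>i<s. Vector_Spaces.linear scaleV scaleW (M i)"
    and "tuple_rank scaleW s M UNIV \<ge> enat r"
  shows "\<exists>U. module.subspace scaleV U
             \<and> (\<exists>B. finite B \<and> module.span scaleV B = U)
             \<and> tuple_rank scaleW s M U \<ge> enat r"
proof -
  interpret V: vector_space scaleV by fact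
  interpret W: complex_vector_space scaleW by (rule complex_vector_space.intro) fact
  define good where "good F c \<longleftrightarrow> enat r \<le> vs_dim scaleW (lincomb scaleW s M c ` F)" for F c
  have "\<exists>F. finite F \<and> (\<forall>c\<in>coeff_sphere s. good F c)"
    using compact_coeff_sphere
  proof (rule compact_finite_witness)
    fix c0 assume "c0 \<in> coeff_sphere s"
    then have "enat r \<le> vs_dim scaleW (lincomb scaleW s M c0 ` UNIV)"
      using assms(4) coeff_sphere_nonzero by (simp add: tuple_rank_ge_iff)
    then show "\<exists>F N. finite F \<and> open N \<and> c0 \<in> N \<and> (\<forall>c\<in>N. good F c)"
      unfolding good_def by (rule W.vs_dim_lincomb_ge_nhds) blast
  next
    fix F G c assume "good F c" "F \<subseteq> G"
    then show "good G c"
      unfolding good_def by (meson image_mono order_trans vs_dim_mono)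
  qed
  then obtain F where "finite F" and F: "\<forall>c\<in>coeff_sphere s. good F c"
    by blast
  have "enat r \<le> vs_dim scaleW (lincomb scaleW s M c ` V.span F)"
    if nonzero: "\<exists>i<s. c i \<noteq> 0" for c
  proof -
    obtain a c' where "a \<noteq> 0" "c' \<in> coeff_sphere s" and c: "\<And>i. i < s \<Longrightarrow> c i = a * c' i"
      using coeff_sphere_normalize[OF nonzero] by blast
    then have "enat r \<le> vs_dim scaleW (lincomb scaleW s M c ` F)"
      using F W.vs_dim_lincomb_scale_coeffs_ge unfolding good_def by blast
    also have "\<dots> \<le> vs_dim scaleW (lincomb scaleW s M c ` V.span F)"
      by (intro vs_dim_mono image_mono V.span_superset)
    finally show ?thesis .
  qed
  then have "enat r \<le> tuple_rank scaleW s M (V.span F)"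
    by (simp add: tuple_rank_ge_iff)
  with \<open>finite F\<close> show ?thesis
    by (intro exI[of _ "V.span F"] conjI V.subspace_span exI[of _ F]) auto
qed

end
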